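(* Let $(a_k)_{k\ge1}$ be an increasing sequence of positive integers such that $$\lim_{k\to\infty}\frac{a_{k+1}}{a_k}=\eta>1$$ for some transcendental number $\eta$. For $n\in\mathbb N$ let $S_n(\omega)=\sum_{k=1}^n\cos(2\pi a_k\omega)$, $\omega\in[0,1]$, viewed as a random variable on $[0,1]$ with Lebesgue measure. Then for every integer $m\ge1$, $$\kappa_m(S_n)-n\widetilde\kappa_m=\mathcal O(1)\qquad\text{as }n\to\infty .$$ In particular $\kappa_m(S_n)/n\to\widetilde\kappa_m$ as $n\to\infty$.
   Context: For a bounded random variable $X$, its $m$-th cumulant is $\kappa_m(X)=\frac{d^m}{dt^m}\log\mathbb E[e^{tX}]\big|_{t=0}$. The constants $\widetilde\kappa_m$ are the cumulants of the arcsine law, i.e. of $\cos(2\pi U)$ with $U$ uniform on $[0,1]$: $\widetilde\kappa_m=\frac{d^m}{dt^m}\log I_0(t)\big|_{t=0}$, where $I_0(t)=\sum_{j\ge0}\frac{(t/2)^{2j}}{(j!)^2}$ is the modified Bessel function of the first kind. Equivalently, $n\widetilde\kappa_m$ is the $m$-th cumulant of $\sum_{k=1}^n\cos(2\pi a_kU_k)$ with $U_1,U_2,\dots$ i.i.d. uniform on $[0,1]$. *)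

theory Defs
  imports "HOL-Probability.Probability" "HOL-Computational_Algebra.Polynomial"
    "HOL-Library.Landau_Symbols"
begin

definition S :: "(nat \<Rightarrow> nat) \<Rightarrow> nat \<Rightarrow> real \<Rightarrow> real" where
  "S a n \<omega> = (\<Sum>k=1..n. cos (2 * pi * real (a k) * \<omega>))"

definition mgf01 :: "(real \<Rightarrow> real) \<Rightarrow> real \<Rightarrow> real" where
  "mgf01 X t = (LINT \<omega>|lebesgue_on {0..1}. exp (t * X \<omega>))"

definition cumulant01 :: "nat \<Rightarrow> (real \<Rightarrow> real) \<Rightarrow> real" where
  "cumulant01 m X = (deriv ^^ m) (\<lambda>t. ln (mgf01 X t)) 0"

definition besselI0 :: "real \<Rightarrow> real" where
  "besselI0 t = (\<Sum>j. (t / 2) ^ (2 * j) / (fact j)^2)"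

text \<open>Cumulants of the arcsine law.\<close>
definition arcsine_cumulant :: "nat \<Rightarrow> real" where
  "arcsine_cumulant m = (deriv ^^ m) (\<lambda>t. ln (besselI0 t)) 0"

end

theory Submission
  imports Defs
begin

(* Write S_{n+1} = S_n + cos(2 pi a_{n+1} omega) and call n resonant (to order m) if some
   q a_{n+1} with 0 < |q| <= m is a sum of i <= m terms +-a_k with k <= n. For nonresonant n,
   expanding powers of the cosine into Fourier modes shows that the first m moments of S_{n+1}
   are the binomial convolutions of those of S_n and of the arcsine law, exactly as if the two
   summands were independent. The m-th cumulant depends only on the first m moments, so
   kappa_m(S_{n+1}) = kappa_m(S_n) + tilde kappa_m; the arcsine cumulants are matched with
   log I_0 through the power series of the moment generating function of cos(2 pi U).

   Resonances occur only finitely often. By induction on i, for every integer polynomial h with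
   h(0) <> 0 the number sum_d h_d a_{N-d} keeps distance at least c a_N from all sums of i terms
   +-a_k with k < N: terms with k close to N are absorbed into h, the others are negligible
   against a_N, and the base case is h(1/eta) <> 0, which holds because eta is transcendental.
   Hence kappa_m(S_n) - n tilde kappa_m is eventually constant. *)

section \<open>Smooth functions and their jets at 0\<close>

definition differentiable_upto :: "nat \<Rightarrow> (real \<Rightarrow> real) \<Rightarrow> bool" where
  "differentiable_upto k f \<longleftrightarrow>
     (\<forall>j<k. \<forall>x. ((deriv ^^ j) f has_real_derivative (deriv ^^ Suc j) f x) (at x))"

definition smooth :: "(real \<Rightarrow> real) \<Rightarrow> bool" where
  "smooth f \<longleftrightarrow> (\<forall>k. differentiable_upto k f)"

lemma deriv_funpow_Suc: "(deriv ^^ Suc j) f = (deriv ^^ j) (deriv f)"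
  by (simp only: funpow_Suc_right comp_apply)

lemma differentiable_upto_0 [simp]: "differentiable_upto 0 f"
  by (simp add: differentiable_upto_def)

lemma differentiable_upto_Suc:
  "differentiable_upto (Suc k) f \<longleftrightarrow>
     (\<forall>x. (f has_real_derivative deriv f x) (at x)) \<and> differentiable_upto k (deriv f)"
  by (auto simp: differentiable_upto_def less_Suc_eq_0_disj deriv_funpow_Suc simp del: funpow.simps)

lemma differentiable_upto_SucI:
  assumes "\<And>x. (f has_real_derivative f' x) (at x)" and "differentiable_upto k f'"
  shows "differentiable_upto (Suc k) f"
proof -
  have "deriv f = f'"
    using assms(1) by (intro ext DERIV_imp_deriv)
  with assms show ?thesis
    by (simp add: differentiable_upto_Suc)
qed

lemma differentiable_upto_mono: "differentiable_upto k f \<Longrightarrow> j \<le> k \<Longrightarrow> differentiable_upto j f"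
  unfolding differentiable_upto_def by auto

lemma differentiable_upto_const: "differentiable_upto k (\<lambda>x. c)"
proof (induction k arbitrary: c)
  case (Suc k)
  show ?case
    by (rule differentiable_upto_SucI[where f' = "\<lambda>x. 0"]) (use Suc in auto)
qed simp

lemma differentiable_upto_add:
  "differentiable_upto k f \<Longrightarrow> differentiable_upto k g \<Longrightarrow> differentiable_upto k (\<lambda>x. f x + g x)"
proof (induction k arbitrary: f g)
  case (Suc k)
  then show ?case
    by (intro differentiable_upto_SucI[where f' = "\<lambda>x. deriv f x + deriv g x"] DERIV_add)
       (auto simp: differentiable_upto_Suc)
qed simp

lemma differentiable_upto_mult:
  "differentiable_upto k f \<Longrightarrow> differentiable_upto k g \<Longrightarrow> differentiable_upto k (\<lambda>x. f x * g x)"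
proof (induction k arbitrary: f g)
  case (Suc k)
  have "differentiable_upto k f" "differentiable_upto k g"
    using Suc.prems differentiable_upto_mono le_SucI by blast+
  with Suc show ?case
    by (intro differentiable_upto_SucI[where f' = "\<lambda>x. deriv f x * g x + f x * deriv g x"]
          differentiable_upto_add)
       (auto simp: differentiable_upto_Suc intro!: derivative_eq_intros)
qed simp

lemma differentiable_upto_inverse:
  assumes "differentiable_upto k f" and "\<And>x. f x > 0"
  shows "differentiable_upto k (\<lambda>x. 1 / f x)"
  using assms(1)
proof (induction k)
  case (Suc k)
  have "differentiable_upto k f" "differentiable_upto k (deriv f)"
    using Suc.prems differentiable_upto_mono le_SucI differentiable_upto_Suc by blast+
  then have "differentiable_upto k (\<lambda>x. -1 * deriv f x * (1 / f x) * (1 / f x))"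
    using Suc.IH differentiable_upto_const by (intro differentiable_upto_mult) auto
  moreover have "((\<lambda>x. 1 / f x) has_real_derivative -1 * deriv f x * (1 / f x) * (1 / f x)) (at x)" for x
    using Suc.prems assms(2)[of x]
    by (auto simp: differentiable_upto_Suc power2_eq_square intro!: derivative_eq_intros)
  ultimately show ?case
    by (rule differentiable_upto_SucI[rotated])
qed simp

lemma differentiable_upto_ln:
  assumes "differentiable_upto k f" and "\<And>x. f x > 0"
  shows "differentiable_upto k (\<lambda>x. ln (f x))"
proof (cases k)
  case (Suc k')
  have "differentiable_upto k' f" "differentiable_upto k' (deriv f)"
    using assms(1) Suc differentiable_upto_mono le_SucI differentiable_upto_Suc by blast+
  then have "differentiable_upto k' (\<lambda>x. deriv f x * (1 / f x))"
    using assms(2) by (intro differentiable_upto_mult differentiable_upto_inverse)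
  moreover have "((\<lambda>x. ln (f x)) has_real_derivative deriv f x * (1 / f x)) (at x)" for x
    using assms Suc by (auto simp: differentiable_upto_Suc intro!: derivative_eq_intros)
  ultimately show ?thesis
    unfolding Suc by (intro differentiable_upto_SucI)
qed simp

lemma smooth_const: "smooth (\<lambda>x. c)"
  by (simp add: smooth_def differentiable_upto_const)

lemma smooth_add: "smooth f \<Longrightarrow> smooth g \<Longrightarrow> smooth (\<lambda>x. f x + g x)"
  by (simp add: smooth_def differentiable_upto_add)

lemma smooth_mult: "smooth f \<Longrightarrow> smooth g \<Longrightarrow> smooth (\<lambda>x. f x * g x)"
  by (simp add: smooth_def differentiable_upto_mult)

lemma smooth_diff: "smooth f \<Longrightarrow> smooth g \<Longrightarrow> smooth (\<lambda>x. f x - g x)"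
  using smooth_add[OF _ smooth_mult[OF smooth_const[of "-1"]]] by simp

lemma smooth_inverse: "smooth f \<Longrightarrow> (\<And>x. f x > 0) \<Longrightarrow> smooth (\<lambda>x. 1 / f x)"
  by (simp add: smooth_def differentiable_upto_inverse)

lemma smooth_ln: "smooth f \<Longrightarrow> (\<And>x. f x > 0) \<Longrightarrow> smooth (\<lambda>x. ln (f x))"
  by (simp add: smooth_def differentiable_upto_ln)

lemma smooth_deriv: "smooth f \<Longrightarrow> smooth (deriv f)"
  by (meson differentiable_upto_Suc smooth_def)

lemma smooth_has_real_derivative_funpow:
  "smooth f \<Longrightarrow> ((deriv ^^ j) f has_real_derivative (deriv ^^ Suc j) f x) (at x)"
  unfolding smooth_def differentiable_upto_def by blast

lemma deriv_funpow_add: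
  assumes "smooth f" "smooth g"
  shows "(deriv ^^ j) (\<lambda>x. f x + g x) = (\<lambda>x. (deriv ^^ j) f x + (deriv ^^ j) g x)"
  using assms
proof (induction j arbitrary: f g)
  case (Suc j)
  have "deriv (\<lambda>x. f x + g x) = (\<lambda>x. deriv f x + deriv g x)"
    using Suc.prems smooth_has_real_derivative_funpow[of _ 0]
    by (intro ext DERIV_imp_deriv DERIV_add) auto
  with Suc show ?case
    by (simp only: deriv_funpow_Suc smooth_deriv)
qed simp

lemma deriv_funpow_diff:
  assumes "smooth f" "smooth g"
  shows "(deriv ^^ j) (\<lambda>x. f x - g x) = (\<lambda>x. (deriv ^^ j) f x - (deriv ^^ j) g x)"
  using assms
proof (induction j arbitrary: f g)
  case (Suc j)
  have "deriv (\<lambda>x. f x - g x) = (\<lambda>x. deriv f x - deriv g x)"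
    using Suc.prems smooth_has_real_derivative_funpow[of _ 0]
    by (intro ext DERIV_imp_deriv DERIV_diff) auto
  with Suc show ?case
    by (simp only: deriv_funpow_Suc smooth_deriv)
qed simp

lemma sum_binomial_Suc:
  fixes F G :: "nat \<Rightarrow> real"
  shows "(\<Sum>i\<le>n. real (n choose i) * (F (Suc i) * G (n - i) + F i * G (Suc (n - i)))) =
    (\<Sum>i\<le>Suc n. real (Suc n choose i) * F i * G (Suc n - i))"
proof -
  have "(\<Sum>i\<le>Suc n. real (Suc n choose i) * F i * G (Suc n - i)) =
      F 0 * G (Suc n) + (\<Sum>i\<le>n. real (n choose Suc i) * F (Suc i) * G (n - i))
      + (\<Sum>i\<le>n. real (n choose i) * F (Suc i) * G (n - i))"
    by (simp add: sum.atMost_Suc_shift algebra_simps sum.distrib del: sum.atMost_Suc)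
  also have "F 0 * G (Suc n) + (\<Sum>i\<le>n. real (n choose Suc i) * F (Suc i) * G (n - i)) =
      (\<Sum>i\<le>Suc n. real (n choose i) * F i * G (Suc n - i))"
    by (simp add: sum.atMost_Suc_shift del: sum.atMost_Suc)
  also have "\<dots> = (\<Sum>i\<le>n. real (n choose i) * F i * G (Suc (n - i)))"
    by (simp add: Suc_diff_le)
  finally show ?thesis
    by (simp add: algebra_simps sum.distrib)
qed

lemma deriv_funpow_mult:
  assumes "smooth f" "smooth g"
  shows "(deriv ^^ n) (\<lambda>x. f x * g x) x =
    (\<Sum>i\<le>n. real (n choose i) * (deriv ^^ i) f x * (deriv ^^ (n - i)) g x)"
proof (induction n arbitrary: x)
  case (Suc n)
  have IH: "(deriv ^^ n) (\<lambda>x. f x * g x) =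
      (\<lambda>x. \<Sum>i\<le>n. real (n choose i) * (deriv ^^ i) f x * (deriv ^^ (n - i)) g x)"
    by (intro ext Suc.IH)
  have "((deriv ^^ n) (\<lambda>x. f x * g x) has_real_derivative
        (\<Sum>i\<le>n. real (n choose i) * ((deriv ^^ Suc i) f x * (deriv ^^ (n - i)) g x
           + (deriv ^^ i) f x * (deriv ^^ Suc (n - i)) g x))) (at x)"
    unfolding IH using assms smooth_has_real_derivative_funpow
    by (auto intro!: derivative_eq_intros simp: algebra_simps)
  then show ?case
    unfolding sum_binomial_Suc[where F = "\<lambda>i. (deriv ^^ i) f x" and G = "\<lambda>i. (deriv ^^ i) g x"]
    by (simp add: DERIV_imp_deriv)
qed simp

definition vanishes_upto :: "nat \<Rightarrow> (real \<Rightarrow> real) \<Rightarrow> bool" where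
  "vanishes_upto m h \<longleftrightarrow> (\<forall>j\<le>m. (deriv ^^ j) h 0 = 0)"

lemma vanishes_upto_Suc: "vanishes_upto (Suc m) h \<longleftrightarrow> h 0 = 0 \<and> vanishes_upto m (deriv h)"
  unfolding vanishes_upto_def less_Suc_eq_le[symmetric] All_less_Suc2 deriv_funpow_Suc by simp

lemma vanishes_upto_mono: "vanishes_upto m h \<Longrightarrow> j \<le> m \<Longrightarrow> vanishes_upto j h"
  by (simp add: vanishes_upto_def)

lemma vanishes_upto_diff:
  "smooth h \<Longrightarrow> smooth k \<Longrightarrow> vanishes_upto m h \<Longrightarrow> vanishes_upto m k \<Longrightarrow>
    vanishes_upto m (\<lambda>x. h x - k x)"
  by (simp add: vanishes_upto_def deriv_funpow_diff)

lemma vanishes_upto_mult: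
  assumes "smooth h" "smooth p" "vanishes_upto m h"
  shows "vanishes_upto m (\<lambda>x. h x * p x)"
  using assms by (simp add: vanishes_upto_def deriv_funpow_mult)

lemma deriv_funpow_ln_eq:
  assumes f: "smooth f" "\<And>x. f x > 0" and g: "smooth g" "\<And>x. g x > 0"
    and jets: "\<And>j. j \<le> m \<Longrightarrow> (deriv ^^ j) f 0 = (deriv ^^ j) g 0"
  shows "(deriv ^^ m) (\<lambda>x. ln (f x)) 0 = (deriv ^^ m) (\<lambda>x. ln (g x)) 0"
proof -
  define h where "h = (\<lambda>x. f x - g x)"
  have h: "smooth h" "vanishes_upto m h"
    using f g jets by (auto simp: h_def vanishes_upto_def smooth_diff deriv_funpow_diff)
  define u where "u = (\<lambda>x. ln (f x) - ln (g x))"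
  have "vanishes_upto m u"
  proof (cases m)
    case 0
    then show ?thesis
      using jets[of 0] by (simp add: vanishes_upto_def u_def)
  next
    case (Suc m')
    have "deriv u = (\<lambda>x. (deriv h x * g x - h x * deriv g x) * (1 / (f x * g x)))"
    proof
      fix x
      have "(u has_real_derivative deriv f x / f x - deriv g x / g x) (at x)"
        unfolding u_def using f g smooth_has_real_derivative_funpow[of _ 0]
        by (auto intro!: derivative_eq_intros)
      moreover have "(h has_real_derivative deriv f x - deriv g x) (at x)"
        unfolding h_def using f g smooth_has_real_derivative_funpow[of _ 0]
        by (auto intro!: derivative_eq_intros)
      ultimately show "deriv u x = (deriv h x * g x - h x * deriv g x) * (1 / (f x * g x))"
        using f(2)[of x] g(2)[of x] by (simp add: DERIV_imp_deriv h_def field_simps)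
    qed
    moreover have "vanishes_upto m' (\<lambda>x. (deriv h x * g x - h x * deriv g x) * (1 / (f x * g x)))"
      using h f g Suc vanishes_upto_Suc vanishes_upto_mono[OF h(2), of m']
      by (intro vanishes_upto_mult vanishes_upto_diff smooth_diff smooth_mult smooth_inverse
          smooth_deriv) auto
    ultimately show ?thesis
      using Suc jets[of 0] by (simp add: vanishes_upto_Suc u_def)
  qed
  then have "(deriv ^^ m) u 0 = 0"
    by (simp add: vanishes_upto_def)
  then show ?thesis
    by (simp add: u_def deriv_funpow_diff[OF smooth_ln[OF f] smooth_ln[OF g]])
qed

section \<open>Cumulants of continuous random variables on [0,1]\<close>

definition tilted_moment :: "(real \<Rightarrow> real) \<Rightarrow> nat \<Rightarrow> real \<Rightarrow> real" where
  "tilted_moment X j t = integral {0..1} (\<lambda>\<omega>. X \<omega> ^ j * exp (t * X \<omega>))"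

lemma has_real_derivative_tilted_moment:
  assumes X: "continuous_on {0..1} X"
  shows "(tilted_moment X j has_real_derivative tilted_moment X (Suc j) t) (at t)"
proof -
  have "continuous_on (UNIV \<times> cbox 0 1) (\<lambda>p. X (snd p))"
    using X by (intro continuous_on_compose2[OF X]) (auto intro: continuous_intros)
  then have "((\<lambda>x. integral (cbox 0 1) (\<lambda>\<omega>. X \<omega> ^ j * exp (x * X \<omega>))) has_field_derivative
      integral (cbox 0 1) (\<lambda>\<omega>. X \<omega> ^ Suc j * exp (t * X \<omega>))) (at t within UNIV)"
    using X
    by (intro leibniz_rule_field_derivative[where fx = "\<lambda>x \<omega>. X \<omega> ^ Suc j * exp (x * X \<omega>)"])
       (auto intro!: derivative_eq_intros integrable_continuous_real continuous_intros
         simp: case_prod_unfold)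
  then show ?thesis
    by (simp add: tilted_moment_def[abs_def])
qed

lemma smooth_tilted_moment:
  assumes "continuous_on {0..1} X"
  shows "smooth (tilted_moment X j)"
proof -
  have "\<forall>j. differentiable_upto k (tilted_moment X j)" for k
    by (induction k) (auto intro: differentiable_upto_SucI has_real_derivative_tilted_moment assms)
  then show ?thesis
    by (simp add: smooth_def)
qed

lemma deriv_funpow_tilted_moment:
  assumes "continuous_on {0..1} X"
  shows "(deriv ^^ j) (tilted_moment X 0) = tilted_moment X j"
  by (induction j) (auto intro!: DERIV_imp_deriv has_real_derivative_tilted_moment assms)

lemma tilted_moment_0_pos:
  assumes X: "continuous_on {0..1} X"
  shows "tilted_moment X 0 t > 0"
proof -
  have cont: "continuous_on {0..1} (\<lambda>\<omega>. exp (t * X \<omega>))"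
    by (intro continuous_intros X)
  moreover have "{0..1::real} \<noteq> {}"
    by simp
  ultimately obtain \<omega>\<^sub>0 where "\<forall>\<omega>\<in>{0..1}. exp (t * X \<omega>\<^sub>0) \<le> exp (t * X \<omega>)"
    using continuous_attains_inf[OF compact_Icc] by blast
  then have "integral {0..1::real} (\<lambda>\<omega>. exp (t * X \<omega>\<^sub>0))
      \<le> integral {0..1} (\<lambda>\<omega>. exp (t * X \<omega>))"
    using cont by (intro integral_le integrable_continuous_real) auto
  then have "exp (t * X \<omega>\<^sub>0) \<le> tilted_moment X 0 t"
    by (simp add: tilted_moment_def)
  then show ?thesis
    using exp_gt_zero[of "t * X \<omega>\<^sub>0"] by linarith
qed

lemma mgf01_eq_tilted_moment:
  assumes "continuous_on {0..1} X"
  shows "mgf01 X = tilted_moment X 0"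
proof
  fix t
  have "continuous_on {0..1} (\<lambda>\<omega>. exp (t * X \<omega>))"
    by (intro continuous_intros assms)
  then show "mgf01 X t = tilted_moment X 0 t"
    by (simp add: mgf01_def tilted_moment_def lebesgue_integral_eq_integral
        continuous_imp_integrable_real)
qed

lemma cumulant01_add_if_moments_convolve:
  assumes X: "continuous_on {0..1} X" and Y: "continuous_on {0..1} Y"
    and Z: "continuous_on {0..1} Z"
    and moments: "\<And>j. j \<le> m \<Longrightarrow> integral {0..1} (\<lambda>\<omega>. Z \<omega> ^ j) =
      (\<Sum>i\<le>j. real (j choose i) * integral {0..1} (\<lambda>\<omega>. X \<omega> ^ i)
        * integral {0..1} (\<lambda>\<omega>. Y \<omega> ^ (j - i)))"
  shows "cumulant01 m Z = cumulant01 m X + cumulant01 m Y"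
proof -
  let ?MX = "tilted_moment X 0" and ?MY = "tilted_moment Y 0" and ?MZ = "tilted_moment Z 0"
  have smooth: "smooth ?MX" "smooth ?MY" "smooth ?MZ" "smooth (\<lambda>t. ?MX t * ?MY t)"
    using X Y Z by (auto intro: smooth_tilted_moment smooth_mult)
  have pos: "?MX t > 0" "?MY t > 0" "?MZ t > 0" "?MX t * ?MY t > 0" for t
    using X Y Z by (simp_all add: tilted_moment_0_pos)
  have "(deriv ^^ j) ?MZ 0 = (deriv ^^ j) (\<lambda>t. ?MX t * ?MY t) 0" if "j \<le> m" for j
  proof -
    have "(deriv ^^ j) ?MZ 0 = integral {0..1} (\<lambda>\<omega>. Z \<omega> ^ j)"
      using Z by (simp add: deriv_funpow_tilted_moment tilted_moment_def)
    also have "\<dots> = (\<Sum>i\<le>j. real (j choose i) * (deriv ^^ i) ?MX 0 * (deriv ^^ (j - i)) ?MY 0)"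
      using X Y by (simp add: moments[OF that] deriv_funpow_tilted_moment tilted_moment_def)
    also have "\<dots> = (deriv ^^ j) (\<lambda>t. ?MX t * ?MY t) 0"
      by (rule deriv_funpow_mult[OF smooth(1,2), symmetric])
    finally show ?thesis .
  qed
  then have "(deriv ^^ m) (\<lambda>t. ln (?MZ t)) 0 = (deriv ^^ m) (\<lambda>t. ln (?MX t * ?MY t)) 0"
    using smooth pos by (intro deriv_funpow_ln_eq) auto
  also have "\<dots> = (deriv ^^ m) (\<lambda>t. ln (?MX t)) 0 + (deriv ^^ m) (\<lambda>t. ln (?MY t)) 0"
    using smooth pos by (simp add: ln_mult_pos deriv_funpow_add smooth_ln)
  finally show ?thesis
    using X Y Z by (simp add: cumulant01_def mgf01_eq_tilted_moment)
qed

section \<open>Moments of lacunary cosine sums\<close>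

lemma integral_cos_2pi_int:
  fixes z :: int
  shows "integral {0..1} (\<lambda>\<omega>. cos (2 * pi * z * \<omega>)) = (if z = 0 then 1 else 0)"
proof (cases "z = 0")
  case False
  define F where "F \<omega> = sin (2 * pi * z * \<omega>) / (2 * pi * z)" for \<omega>
  have "((\<lambda>\<omega>. cos (2 * pi * z * \<omega>)) has_integral (F 1 - F 0)) {0..1}"
    using False
    by (intro fundamental_theorem_of_calculus)
       (auto simp: F_def has_real_derivative_iff_has_vector_derivative[symmetric]
         intro!: derivative_eq_intros)
  moreover have "F 1 = 0" "F 0 = 0"
    using sin_integer_2pi[of z] by (simp_all add: F_def mult.commute)
  ultimately show ?thesis
    using False by (simp add: integral_unique)
qed simp

lemma cos_power_eq_sum:
  fixes x :: real
  shows "cos x ^ r = (\<Sum>s\<le>r. real (r choose s) / 2 ^ r * cos ((real (2 * s) - real r) * x))"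
proof -
  define c where "c = cis x"
  have "complex_of_real (cos x ^ r) = ((c + inverse c) / 2) ^ r"
    by (simp add: c_def cis.ctr complex_eq_iff)
  also have "\<dots> = (\<Sum>s\<le>r. of_nat (r choose s) / 2 ^ r * (c ^ s * inverse c ^ (r - s)))"
    by (simp add: power_divide binomial_ring sum_divide_distrib algebra_simps)
  also have "\<dots> = (\<Sum>s\<le>r. of_real (real (r choose s) / 2 ^ r) * cis ((real (2 * s) - real r) * x))"
  proof (intro sum.cong refl)
    fix s assume "s \<in> {..r}"
    have "c ^ s * inverse c ^ (r - s) = cis (real s * x) * cis (- (real (r - s) * x))"
      by (simp add: c_def Complex.DeMoivre)
    also have "\<dots> = cis ((real (2 * s) - real r) * x)"
      using \<open>s \<in> {..r}\<close> by (simp add: cis_mult of_nat_diff algebra_simps)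
    finally show "of_nat (r choose s) / 2 ^ r * (c ^ s * inverse c ^ (r - s)) =
        of_real (real (r choose s) / 2 ^ r) * cis ((real (2 * s) - real r) * x)"
      by simp
  qed
  finally show ?thesis
    by (simp add: complex_eq_iff Re_sum)
qed

fun sumset :: "int set \<Rightarrow> nat \<Rightarrow> int set" where
  "sumset A 0 = {0}"
| "sumset A (Suc i) = {z + y | z y. z \<in> sumset A i \<and> y \<in> A}"

definition signed_terms :: "(nat \<Rightarrow> nat) \<Rightarrow> nat \<Rightarrow> int set" where
  "signed_terms a n = {int (a k) | k. k \<in> {1..n}} \<union> {- int (a k) | k. k \<in> {1..n}}"

lemma sumset_SucI: "z \<in> sumset A i \<Longrightarrow> y \<in> A \<Longrightarrow> z + y \<in> sumset A (Suc i)"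
  by auto

lemma continuous_on_S: "continuous_on A (S a n)"
  unfolding S_def by (intro continuous_intros)

lemma S_pow_Suc_mult_cos:
  "S a n \<omega> ^ Suc i * cos (2 * pi * w * \<omega>) =
    (\<Sum>k=1..n. (S a n \<omega> ^ i * cos (2 * pi * (w - a k) * \<omega>)
      + S a n \<omega> ^ i * cos (2 * pi * (w + a k) * \<omega>)) / 2)"
proof -
  have "S a n \<omega> * cos (2 * pi * w * \<omega>) =
      (\<Sum>k=1..n. cos (2 * pi * w * \<omega>) * cos (2 * pi * a k * \<omega>))"
    by (simp add: S_def sum_distrib_left mult.commute)
  then have "S a n \<omega> ^ Suc i * cos (2 * pi * w * \<omega>) =
      S a n \<omega> ^ i * (\<Sum>k=1..n. cos (2 * pi * w * \<omega>) * cos (2 * pi * a k * \<omega>))"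
    by (simp add: mult_ac)
  then show ?thesis
    by (simp add: cos_times_cos sum_distrib_left add_divide_distrib distrib_left
        left_diff_distrib right_diff_distrib distrib_right)
qed

lemma integral_S_pow_mult_cos_eq_0:
  fixes w :: int
  assumes "w \<notin> sumset (signed_terms a n) i"
  shows "integral {0..1} (\<lambda>\<omega>. S a n \<omega> ^ i * cos (2 * pi * w * \<omega>)) = 0"
  using assms
proof (induction i arbitrary: w)
  case 0
  then show ?case
    by (simp add: integral_cos_2pi_int)
next
  case (Suc i)
  let ?I = "\<lambda>v::real. integral {0..1} (\<lambda>\<omega>. S a n \<omega> ^ i * cos (2 * pi * v * \<omega>))"
  have shifted: "?I (w - a k) = 0" "?I (w + a k) = 0" if "k \<in> {1..n}" for k
  proof -
    have "int (a k) \<in> signed_terms a n" "- int (a k) \<in> signed_terms a n"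
      using that by (auto simp: signed_terms_def)
    then have "w - a k \<notin> sumset (signed_terms a n) i" "w + a k \<notin> sumset (signed_terms a n) i"
      using Suc.prems sumset_SucI by fastforce+
    then show "?I (w - a k) = 0" "?I (w + a k) = 0"
      using Suc.IH by fastforce+
  qed
  have "(\<lambda>\<omega>. S a n \<omega> ^ i * cos (2 * pi * v * \<omega>)) integrable_on {0..1}" for v
    by (intro integrable_continuous_real continuous_intros continuous_on_S)
  then show ?case
    unfolding S_pow_Suc_mult_cos using shifted by (simp add: integral_sum integral_add integrable_add)
qed

definition arcsine_moment :: "nat \<Rightarrow> real" where
  "arcsine_moment r = (if even r then real (r choose (r div 2)) / 2 ^ r else 0)"

lemma sum_binomial_central:
  "(\<Sum>s\<le>r. real (r choose s) * (if 2 * s = r then c else 0) / 2 ^ r) = arcsine_moment r * c"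
proof (cases "even r")
  case True
  then have "(\<Sum>s\<le>r. real (r choose s) * (if 2 * s = r then c else 0) / 2 ^ r) =
      (\<Sum>s\<le>r. if s = r div 2 then real (r choose s) / 2 ^ r * c else 0)"
    by (intro sum.cong) auto
  with True show ?thesis
    by (simp add: arcsine_moment_def)
qed (auto simp: arcsine_moment_def intro!: sum.neutral)

lemma integral_S_pow_mult_cos_pow:
  fixes b :: int
  assumes nonres: "\<And>q::int. q \<noteq> 0 \<Longrightarrow> \<bar>q\<bar> \<le> int r \<Longrightarrow>
    q * b \<notin> sumset (signed_terms a n) i"
  shows "integral {0..1} (\<lambda>\<omega>. S a n \<omega> ^ i * cos (2 * pi * b * \<omega>) ^ r) =
    arcsine_moment r * integral {0..1} (\<lambda>\<omega>. S a n \<omega> ^ i)"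
proof -
  define q where "q s = int (2 * s) - int r" for s
  have expand: "(\<lambda>\<omega>. S a n \<omega> ^ i * cos (2 * pi * b * \<omega>) ^ r) =
      (\<lambda>\<omega>. \<Sum>s\<le>r. real (r choose s) / 2 ^ r * (S a n \<omega> ^ i * cos (2 * pi * (q s * b) * \<omega>)))"
    by (simp add: cos_power_eq_sum q_def sum_distrib_left mult_ac)
  have summand: "integral {0..1} (\<lambda>\<omega>. S a n \<omega> ^ i * cos (2 * pi * (q s * b) * \<omega>)) =
      (if 2 * s = r then integral {0..1} (\<lambda>\<omega>. S a n \<omega> ^ i) else 0)" if "s \<le> r" for s
  proof (cases "2 * s = r")
    case False
    then have "q s \<noteq> 0" "\<bar>q s\<bar> \<le> int r"
      using that by (auto simp: q_def)
    with False show ?thesis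
      using nonres integral_S_pow_mult_cos_eq_0 by (simp del: of_int_mult)
  qed (simp add: q_def)
  have "(\<lambda>\<omega>. c * (S a n \<omega> ^ i * cos (2 * pi * v * \<omega>))) integrable_on {0..1}" for c v
    by (intro integrable_continuous_real continuous_intros continuous_on_S)
  then show ?thesis
    unfolding expand
    by (simp add: integral_sum summand sum_binomial_central del: of_int_mult)
qed

lemma integral_cos_pow: "integral {0..1} (\<lambda>\<omega>. cos (2 * pi * \<omega>) ^ r) = arcsine_moment r"
  using integral_S_pow_mult_cos_pow[of r 1 a 0 0] by simp

definition nonresonant :: "(nat \<Rightarrow> nat) \<Rightarrow> nat \<Rightarrow> nat \<Rightarrow> bool" where
  "nonresonant a m n \<longleftrightarrow> (\<forall>i\<le>m. \<forall>q::int. q \<noteq> 0 \<longrightarrow> \<bar>q\<bar> \<le> int m \<longrightarrow>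
     q * int (a (Suc n)) \<notin> sumset (signed_terms a n) i)"

lemma integral_S_Suc_pow:
  assumes "nonresonant a m n" and "j \<le> m"
  shows "integral {0..1} (\<lambda>\<omega>. S a (Suc n) \<omega> ^ j) =
    (\<Sum>i\<le>j. real (j choose i) * integral {0..1} (\<lambda>\<omega>. S a n \<omega> ^ i)
      * integral {0..1} (\<lambda>\<omega>. cos (2 * pi * \<omega>) ^ (j - i)))"
proof -
  let ?c = "\<lambda>\<omega>. cos (2 * pi * real (a (Suc n)) * \<omega>)"
  have "(\<lambda>\<omega>. S a (Suc n) \<omega> ^ j) =
      (\<lambda>\<omega>. \<Sum>i\<le>j. real (j choose i) * (S a n \<omega> ^ i * ?c \<omega> ^ (j - i)))"
    by (simp add: S_def binomial_ring mult.assoc)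
  moreover have "(\<lambda>\<omega>. c * (S a n \<omega> ^ i * ?c \<omega> ^ (j - i))) integrable_on {0..1}" for c i
    by (intro integrable_continuous_real continuous_intros continuous_on_S)
  ultimately have "integral {0..1} (\<lambda>\<omega>. S a (Suc n) \<omega> ^ j) =
      (\<Sum>i\<le>j. real (j choose i) * integral {0..1} (\<lambda>\<omega>. S a n \<omega> ^ i * ?c \<omega> ^ (j - i)))"
    by (simp add: integral_sum)
  also have "\<dots> = (\<Sum>i\<le>j. real (j choose i) * integral {0..1} (\<lambda>\<omega>. S a n \<omega> ^ i)
      * integral {0..1} (\<lambda>\<omega>. cos (2 * pi * \<omega>) ^ (j - i)))"
  proof (intro sum.cong refl)
    fix i assume "i \<in> {..j}"
    with assms have "integral {0..1} (\<lambda>\<omega>. S a n \<omega> ^ i * cos (2 * pi * int (a (Suc n)) * \<omega>) ^ (j - i)) =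
        arcsine_moment (j - i) * integral {0..1} (\<lambda>\<omega>. S a n \<omega> ^ i)"
      unfolding nonresonant_def by (intro integral_S_pow_mult_cos_pow) auto
    then show "real (j choose i) * integral {0..1} (\<lambda>\<omega>. S a n \<omega> ^ i * ?c \<omega> ^ (j - i)) =
        real (j choose i) * integral {0..1} (\<lambda>\<omega>. S a n \<omega> ^ i)
          * integral {0..1} (\<lambda>\<omega>. cos (2 * pi * \<omega>) ^ (j - i))"
      by (simp add: integral_cos_pow)
  qed
  finally show ?thesis .
qed

lemma cumulant01_S_Suc:
  assumes "nonresonant a m n"
  shows "cumulant01 m (S a (Suc n)) = cumulant01 m (S a n) + cumulant01 m (\<lambda>\<omega>. cos (2 * pi * \<omega>))"
  using assms
  by (intro cumulant01_add_if_moments_convolve continuous_on_S integral_S_Suc_pow)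
     (auto intro: continuous_intros)

section \<open>The arcsine law\<close>

lemma sums_tilted_moment_cos:
  "(\<lambda>r. t ^ r / fact r * arcsine_moment r) sums tilted_moment (\<lambda>\<omega>. cos (2 * pi * \<omega>)) 0 t"
proof -
  define f where "f = (\<lambda>K \<omega>. \<Sum>r<K. (t * cos (2 * pi * \<omega>)) ^ r / fact r)"
  have exp_abs: "(\<lambda>r. \<bar>t\<bar> ^ r / fact r) sums exp \<bar>t\<bar>"
    using exp_converges[of "\<bar>t\<bar>"] by (simp add: field_simps)
  have "\<bar>f K \<omega>\<bar> \<le> exp \<bar>t\<bar>" for K \<omega>
  proof -
    have "\<bar>f K \<omega>\<bar> \<le> (\<Sum>r<K. \<bar>t\<bar> ^ r / fact r)"
      unfolding f_def
      by (rule order_trans[OF sum_abs sum_mono])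
         (auto simp: abs_mult power_abs power_mult_distrib intro!: divide_right_mono mult_left_le power_le_one)
    also have "\<dots> \<le> (\<Sum>r. \<bar>t\<bar> ^ r / fact r)"
      using exp_abs by (intro sum_le_suminf) (auto simp: sums_iff)
    also have "\<dots> = exp \<bar>t\<bar>"
      using exp_abs by (simp add: sums_iff)
    finally show ?thesis .
  qed
  moreover have "(\<lambda>K. f K \<omega>) \<longlonglongrightarrow> exp (t * cos (2 * pi * \<omega>))" for \<omega>
    using exp_converges[of "t * cos (2 * pi * \<omega>)"] by (simp add: f_def sums_def field_simps)
  moreover have "f K integrable_on {0..1}" for K
    unfolding f_def by (auto intro!: integrable_continuous_real continuous_intros)
  ultimately have "(\<lambda>K. integral {0..1} (f K))
      \<longlonglongrightarrow> integral {0..1} (\<lambda>\<omega>. exp (t * cos (2 * pi * \<omega>)))"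
    by (intro dominated_convergence(2)[where h = "\<lambda>\<omega>. exp \<bar>t\<bar>"]) auto
  moreover have "integral {0..1} (f K) = (\<Sum>r<K. t ^ r / fact r * arcsine_moment r)" for K
  proof -
    have "integral {0..1} (f K) =
        integral {0..1} (\<lambda>\<omega>. \<Sum>r<K. t ^ r / fact r * cos (2 * pi * \<omega>) ^ r)"
      by (simp add: f_def power_mult_distrib)
    also have "\<dots> = (\<Sum>r<K. integral {0..1} (\<lambda>\<omega>. t ^ r / fact r * cos (2 * pi * \<omega>) ^ r))"
      by (rule integral_sum) (auto intro!: integrable_continuous_real continuous_intros)
    finally show ?thesis
      by (simp add: integral_cos_pow)
  qed
  ultimately show ?thesis
    by (simp add: sums_def tilted_moment_def)
qed

lemma besselI0_eq_mgf01: "besselI0 = mgf01 (\<lambda>\<omega>. cos (2 * pi * \<omega>))"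
proof
  fix t
  have "(\<lambda>j. t ^ (2 * j) / fact (2 * j) * arcsine_moment (2 * j))
      sums tilted_moment (\<lambda>\<omega>. cos (2 * pi * \<omega>)) 0 t"
    using sums_tilted_moment_cos
    by (subst sums_mono_reindex[where g = "\<lambda>j. 2 * j"])
       (auto simp: strict_mono_def arcsine_moment_def elim!: evenE)
  moreover have "t ^ (2 * j) / fact (2 * j) * arcsine_moment (2 * j) = (t / 2) ^ (2 * j) / (fact j)\<^sup>2" for j
    by (simp add: arcsine_moment_def binomial_fact power2_eq_square power_divide power_mult_distrib field_simps)
  ultimately show "besselI0 t = mgf01 (\<lambda>\<omega>. cos (2 * pi * \<omega>)) t"
    by (simp add: besselI0_def sums_iff mgf01_eq_tilted_moment continuous_intros)
qed

lemma arcsine_cumulant_eq_cumulant01: "arcsine_cumulant m = cumulant01 m (\<lambda>\<omega>. cos (2 * pi * \<omega>))"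
  by (simp add: arcsine_cumulant_def cumulant01_def besselI0_eq_mgf01)

section \<open>Finitely many resonances\<close>

(* The value at N of h(B) applied to the sequence a, where B is the backward shift. *)
definition backshift_eval :: "(nat \<Rightarrow> nat) \<Rightarrow> int poly \<Rightarrow> nat \<Rightarrow> real" where
  "backshift_eval a h N = (\<Sum>d\<le>degree h. of_int (coeff h d) * real (a (N - d)))"

lemma backshift_eval_eq_sum:
  "degree h \<le> D \<Longrightarrow> backshift_eval a h N = (\<Sum>d\<le>D. of_int (coeff h d) * real (a (N - d)))"
  unfolding backshift_eval_def by (rule sum.mono_neutral_left) (auto simp: coeff_eq_0)

lemma backshift_eval_add_monom:
  "backshift_eval a (h + monom e d) N = backshift_eval a h N + of_int e * real (a (N - d))"
proof -
  define D where "D = max (degree h) d"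
  have deg: "degree h \<le> D" "degree (h + monom e d) \<le> D"
    by (auto simp: D_def intro!: degree_add_le order.trans[OF degree_monom_le])
  have "backshift_eval a (h + monom e d) N = (\<Sum>i\<le>D. of_int (coeff h i) * real (a (N - i))
      + (if i = d then of_int e * real (a (N - d)) else 0))"
    unfolding backshift_eval_eq_sum[OF deg(2)] by (intro sum.cong) (auto simp: coeff_monom algebra_simps)
  also have "\<dots> = backshift_eval a h N + of_int e * real (a (N - d))"
    unfolding backshift_eval_eq_sum[OF deg(1)] sum.distrib by (simp add: D_def)
  finally show ?thesis .
qed

lemma backshift_eval_const: "backshift_eval a [:q:] N = of_int q * real (a N)"
  by (simp add: backshift_eval_def)

definition far_from_sumset ::
    "(nat \<Rightarrow> nat) \<Rightarrow> nat \<Rightarrow> int poly \<Rightarrow> real \<Rightarrow> nat \<Rightarrow> bool" where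
  "far_from_sumset a i h c N \<longleftrightarrow>
     (\<forall>z\<in>sumset (signed_terms a (N - 1)) i. c * real (a N) \<le> \<bar>backshift_eval a h N + of_int z\<bar>)"

lemma far_from_sumset_mono: "c' \<le> c \<Longrightarrow> far_from_sumset a i h c N \<Longrightarrow> far_from_sumset a i h c' N"
  unfolding far_from_sumset_def by (meson mult_right_mono of_nat_0_le_iff order.trans)

lemma sumset_signed_terms_SucE:
  assumes "z \<in> sumset (signed_terms a n) (Suc i)"
  obtains x k e where "x \<in> sumset (signed_terms a n) i" "k \<in> {1..n}" "e \<in> {-1, 1}"
    "z = x + e * int (a k)"
proof -
  obtain x y where "x \<in> sumset (signed_terms a n) i" "y \<in> signed_terms a n" "z = x + y"
    using assms by auto
  moreover obtain k e where "k \<in> {1..n}" "e \<in> {-1, 1}" "y = e * int (a k)"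
    using \<open>y \<in> signed_terms a n\<close> unfolding signed_terms_def by force
  ultimately show thesis
    using that by blast
qed

lemma eventually_ball_finite_ex_pos:
  fixes P :: "'a \<Rightarrow> real \<Rightarrow> 'b \<Rightarrow> bool"
  assumes "finite T" and "\<And>x. x \<in> T \<Longrightarrow> \<exists>c>0. eventually (P x c) F"
    and mono: "\<And>x c c' y. c' \<le> c \<Longrightarrow> P x c y \<Longrightarrow> P x c' y"
  shows "\<exists>c>0. eventually (\<lambda>y. \<forall>x\<in>T. P x c y) F"
  using assms(1,2)
proof (induction T rule: finite_induct)
  case empty
  show ?case
    by (auto intro!: exI[of _ 1])
next
  case (insert x T)
  obtain c1 where "c1 > 0" and c1: "eventually (\<lambda>y. \<forall>x\<in>T. P x c1 y) F"
    using insert by blast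
  obtain c2 where "c2 > 0" and c2: "eventually (P x c2) F"
    using insert.prems by blast
  from c1 c2 have "eventually (\<lambda>y. \<forall>x'\<in>insert x T. P x' (min c1 c2) y) F"
    by eventually_elim (auto intro: mono[rotated])
  then show ?case
    using \<open>c1 > 0\<close> \<open>c2 > 0\<close> by (intro exI[of _ "min c1 c2"]) auto
qed

locale lacunary_transcendental =
  fixes a :: "nat \<Rightarrow> nat" and \<eta> :: real
  assumes pos: "\<forall>k\<ge>1. 0 < a k"
    and incr: "\<forall>k\<ge>1. a k < a (Suc k)"
    and ratio: "(\<lambda>k. real (a (Suc k)) / real (a k)) \<longlonglongrightarrow> \<eta>"
    and eta_gt: "\<eta> > 1"
    and transc: "\<not> algebraic \<eta>"
begin

lemma a_mono:
  assumes "1 \<le> k" and "k \<le> k'"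
  shows "a k \<le> a k'"
  using assms(2) by (induction k' rule: dec_induct) (use assms(1) incr in \<open>auto intro: less_imp_le order.trans\<close>)

lemma eventually_a_pos: "eventually (\<lambda>N. a (N - d) > 0) sequentially"
  unfolding eventually_sequentially using pos by (intro exI[of _ "Suc d"]) auto

lemma ratio_shift_tendsto: "(\<lambda>N. real (a (N - d)) / real (a N)) \<longlonglongrightarrow> (1 / \<eta>) ^ d"
proof (induction d)
  case 0
  have "eventually (\<lambda>N. real (a (N - 0)) / real (a N) = 1) sequentially"
    using eventually_a_pos[of 0] by eventually_elim simp
  then show ?case
    by (simp add: tendsto_eventually)
next
  case (Suc d)
  have "(\<lambda>N. 1 / (real (a (Suc (N - Suc d))) / real (a (N - Suc d)))) \<longlonglongrightarrow> 1 / \<eta>"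
    using eta_gt by (intro tendsto_divide tendsto_const seq_offset_neg[OF ratio]) auto
  then have "(\<lambda>N. 1 / (real (a (Suc (N - Suc d))) / real (a (N - Suc d))) * (real (a (N - d)) / real (a N)))
      \<longlonglongrightarrow> 1 / \<eta> * (1 / \<eta>) ^ d"
    by (intro tendsto_mult Suc.IH)
  moreover have "eventually (\<lambda>N. 1 / (real (a (Suc (N - Suc d))) / real (a (N - Suc d)))
      * (real (a (N - d)) / real (a N)) = real (a (N - Suc d)) / real (a N)) sequentially"
    using eventually_a_pos[of "Suc d"] eventually_a_pos[of d] eventually_ge_at_top[of "Suc d"]
    by eventually_elim (simp add: Suc_diff_Suc)
  ultimately show ?case
    by (simp add: tendsto_cong)
qed

lemma backshift_eval_tendsto:
  "(\<lambda>N. backshift_eval a h N / real (a N)) \<longlonglongrightarrow> poly (map_poly real_of_int h) (1 / \<eta>)"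
proof -
  have "(\<lambda>N. \<Sum>d\<le>degree h. of_int (coeff h d) * (real (a (N - d)) / real (a N)))
      \<longlonglongrightarrow> (\<Sum>d\<le>degree h. of_int (coeff h d) * (1 / \<eta>) ^ d)"
    by (intro tendsto_sum tendsto_mult tendsto_const ratio_shift_tendsto)
  then show ?thesis
    by (simp add: backshift_eval_def sum_divide_distrib poly_altdef degree_map_poly coeff_map_poly)
qed

lemma poly_inverse_eta_neq_0:
  assumes "h \<noteq> 0"
  shows "poly (map_poly real_of_int h) (1 / \<eta>) \<noteq> 0"
proof
  assume "poly (map_poly real_of_int h) (1 / \<eta>) = 0"
  moreover have "map_poly real_of_int h \<noteq> 0" "\<forall>i. coeff (map_poly real_of_int h) i \<in> \<int>"
    using assms by (auto simp: coeff_map_poly map_poly_eq_0_iff)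
  ultimately have "algebraic (inverse (1 / \<eta>))"
    using algebraicI algebraic_inverse by blast
  with transc show False
    by simp
qed

lemma far_from_sumset_0:
  assumes "h \<noteq> 0"
  shows "\<exists>c>0. eventually (far_from_sumset a 0 h c) sequentially"
proof -
  define L where "L = poly (map_poly real_of_int h) (1 / \<eta>)"
  have "L \<noteq> 0"
    using poly_inverse_eta_neq_0[OF assms] by (simp add: L_def)
  then have "eventually (\<lambda>N. dist (backshift_eval a h N / real (a N)) L < \<bar>L\<bar> / 2) sequentially"
    using backshift_eval_tendsto[of h] by (intro tendstoD) (auto simp: L_def)
  then have "eventually (far_from_sumset a 0 h (\<bar>L\<bar> / 2)) sequentially"
    using eventually_a_pos[of 0]
  proof eventually_elim
    case (elim N)
    then have "\<bar>L\<bar> / 2 \<le> \<bar>backshift_eval a h N / real (a N)\<bar>"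
      unfolding dist_real_def by linarith
    with elim(2) show ?case
      by (simp add: far_from_sumset_def field_simps)
  qed
  with \<open>L \<noteq> 0\<close> show ?thesis
    by (intro exI[of _ "\<bar>L\<bar> / 2"]) auto
qed

(* Write z = x +- a_k with x a sum of i terms: if N - k <= D, the term +-a_k is absorbed into
   the polynomial h +- X^(N - k); otherwise it is at most c0/2 a_N. *)
lemma far_from_sumset_SucI:
  assumes far_h: "far_from_sumset a i h c0 N"
    and far_shifted: "\<And>d e. d \<in> {1..D} \<Longrightarrow> e \<in> {-1, 1} \<Longrightarrow>
      far_from_sumset a i (h + monom e d) c1 N"
    and small: "real (a (N - Suc D)) \<le> c0 / 2 * real (a N)"
  shows "far_from_sumset a (Suc i) h (min (c0 / 2) c1) N"
  unfolding far_from_sumset_def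
proof
  fix z assume "z \<in> sumset (signed_terms a (N - 1)) (Suc i)"
  then obtain x k e where x: "x \<in> sumset (signed_terms a (N - 1)) i"
    and k: "k \<in> {1..N - 1}" and e: "e \<in> {-1, 1}" and z: "z = x + e * int (a k)"
    by (rule sumset_signed_terms_SucE)
  show "min (c0 / 2) c1 * real (a N) \<le> \<bar>backshift_eval a h N + of_int z\<bar>"
  proof (cases "N - k \<le> D")
    case True
    then have "c1 * real (a N) \<le> \<bar>backshift_eval a (h + monom e (N - k)) N + of_int x\<bar>"
      using far_shifted[of "N - k" e] k e x by (auto simp: far_from_sumset_def)
    moreover have "N - (N - k) = k"
      using k by auto
    ultimately show ?thesis
      by (simp add: backshift_eval_add_monom z add.assoc
          order.trans[OF mult_right_mono[OF min.cobounded2]])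
  next
    case False
    then have "real (a k) \<le> real (a (N - Suc D))"
      using k a_mono by auto
    with small e have "\<bar>of_int (e * int (a k))\<bar> \<le> c0 / 2 * real (a N)"
      by auto
    moreover have "c0 * real (a N) \<le> \<bar>backshift_eval a h N + of_int x\<bar>"
      using far_h x by (auto simp: far_from_sumset_def)
    moreover have "min (c0 / 2) c1 * real (a N) \<le> c0 / 2 * real (a N)"
      by (intro mult_right_mono) auto
    ultimately show ?thesis
      unfolding z of_int_add by linarith
  qed
qed

lemma far_from_sumset_Suc:
  assumes IH: "\<And>g. coeff g 0 \<noteq> 0 \<Longrightarrow> \<exists>c>0. eventually (far_from_sumset a i g c) sequentially"
    and h: "coeff h 0 \<noteq> 0"
  shows "\<exists>c>0. eventually (far_from_sumset a (Suc i) h c) sequentially"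
proof -
  obtain c0 where "c0 > 0" and far_h: "eventually (far_from_sumset a i h c0) sequentially"
    using IH h by blast
  have "eventually (\<lambda>D. (1 / \<eta>) ^ D < c0 / 2) sequentially"
    using eta_gt \<open>c0 > 0\<close> by (intro order_tendstoD(2)[OF LIMSEQ_power_zero]) auto
  then obtain D where "(1 / \<eta>) ^ Suc D < c0 / 2"
    by (meson eventually_sequentially le_SucI order.refl)
  then have "eventually (\<lambda>N. real (a (N - Suc D)) / real (a N) < c0 / 2) sequentially"
    by (intro order_tendstoD(2)[OF ratio_shift_tendsto])
  with eventually_a_pos[of 0]
  have small: "eventually (\<lambda>N. real (a (N - Suc D)) \<le> c0 / 2 * real (a N)) sequentially"
    by eventually_elim (simp add: field_simps)
  have "\<exists>c>0. eventually (\<lambda>N. \<forall>(d, e)\<in>{1..D} \<times> {-1, 1}. far_from_sumset a i (h + monom e d) c N)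
      sequentially"
    using h by (intro eventually_ball_finite_ex_pos)
      (auto intro: IH far_from_sumset_mono simp: coeff_monom)
  then obtain c1 where "c1 > 0" and far_shifted:
    "eventually (\<lambda>N. \<forall>(d, e)\<in>{1..D} \<times> {-1, 1}. far_from_sumset a i (h + monom e d) c1 N) sequentially"
    by blast
  from far_h far_shifted small
  have "eventually (far_from_sumset a (Suc i) h (min (c0 / 2) c1)) sequentially"
    by eventually_elim (rule far_from_sumset_SucI; auto)
  then show ?thesis
    using \<open>c0 > 0\<close> \<open>c1 > 0\<close> by (intro exI[of _ "min (c0 / 2) c1"]) auto
qed

lemma far_from_sumset:
  assumes "coeff h 0 \<noteq> 0"
  shows "\<exists>c>0. eventually (far_from_sumset a i h c) sequentially"
  using assms
proof (induction i arbitrary: h)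
  case 0
  then have "h \<noteq> 0"
    by auto
  then show ?case
    by (rule far_from_sumset_0)
next
  case (Suc i)
  then show ?case
    by (intro far_from_sumset_Suc)
qed

lemma eventually_nonresonant: "eventually (nonresonant a m) sequentially"
proof -
  define Q where "Q = {..m} \<times> ({-int m..int m} - {0})"
  define R where "R N \<longleftrightarrow>
    (\<forall>p\<in>Q. \<forall>z\<in>sumset (signed_terms a (N - 1)) (fst p). z \<noteq> snd p * int (a N))" for N
  have "eventually (\<lambda>N. \<forall>z\<in>sumset (signed_terms a (N - 1)) (fst p). z \<noteq> snd p * int (a N))
      sequentially" if "p \<in> Q" for p
  proof -
    have "coeff [:- snd p:] 0 \<noteq> 0"
      using that by (auto simp: Q_def)
    then obtain c where "c > 0"
      and far: "eventually (far_from_sumset a (fst p) [:- snd p:] c) sequentially"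
      using far_from_sumset by blast
    from far eventually_a_pos[of 0] show ?thesis
    proof eventually_elim
      case (elim N)
      show ?case
      proof (intro ballI notI)
        fix z assume "z \<in> sumset (signed_terms a (N - 1)) (fst p)" "z = snd p * int (a N)"
        with elim(1) have "c * real (a N) \<le> 0"
          by (auto simp: far_from_sumset_def backshift_eval_const)
        with \<open>c > 0\<close> elim(2) show False
          by (simp add: mult_le_0_iff)
      qed
    qed
  qed
  then have "eventually R sequentially"
    unfolding R_def by (intro eventually_ball_finite) (auto simp: Q_def)
  then have "eventually (\<lambda>n. R (Suc n)) sequentially"
    by simp
  then show ?thesis
    by eventually_elim (force simp: R_def nonresonant_def Q_def)
qed

end

lemma eventually_constant_increment:
  fixes f :: "nat \<Rightarrow> real"
  assumes "eventually (\<lambda>n. f (Suc n) = f n + c) sequentially"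
  shows "(\<lambda>n. f n - real n * c) \<in> O(\<lambda>n. 1) \<and> (\<lambda>n. f n / real n) \<longlonglongrightarrow> c"
proof -
  obtain N where step: "\<And>n. n \<ge> N \<Longrightarrow> f (Suc n) = f n + c"
    using assms by (auto simp: eventually_sequentially)
  define K where "K = f N - real N * c"
  have const: "f n - real n * c = K" if "n \<ge> N" for n
    using that by (induction n rule: dec_induct) (auto simp: K_def step algebra_simps)
  have "(\<lambda>n. f n - real n * c) \<in> O(\<lambda>n. 1)"
    by (intro bigoI[where c = "\<bar>K\<bar>"]) (auto simp: eventually_at_top_linorder const intro!: exI[of _ N])
  moreover have "(\<lambda>n. f n / real n) \<longlonglongrightarrow> c"
  proof -
    have "eventually (\<lambda>n. c + K / real n = f n / real n) sequentially"
      using eventually_ge_at_top[of N] eventually_gt_at_top[of 0]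
      by eventually_elim (auto simp: const[symmetric] field_simps)
    moreover have "(\<lambda>n. c + K / real n) \<longlonglongrightarrow> c + 0"
      by (intro tendsto_add tendsto_const lim_const_over_n)
    ultimately show ?thesis
      using Lim_transform_eventually by fastforce
  qed
  ultimately show ?thesis ..
qed

theorem theoremA:
  fixes a :: "nat \<Rightarrow> nat" and \<eta> :: real and m :: nat
  assumes pos: "\<forall>k\<ge>1. 0 < a k"
    and incr: "\<forall>k\<ge>1. a k < a (Suc k)"
    and lim: "(\<lambda>k. real (a (Suc k)) / real (a k)) \<longlonglongrightarrow> \<eta>"
    and eta_gt: "\<eta> > 1"
    and transc: "\<not> algebraic \<eta>"
    and m: "m \<ge> 1"
  shows "(\<lambda>n. cumulant01 m (S a n) - real n * arcsine_cumulant m) \<in> O(\<lambda>n. 1)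
    \<and> (\<lambda>n. cumulant01 m (S a n) / real n) \<longlonglongrightarrow> arcsine_cumulant m"
proof -
  interpret lacunary_transcendental a \<eta>
    using pos incr lim eta_gt transc by unfold_locales
  have "eventually (\<lambda>n. cumulant01 m (S a (Suc n)) = cumulant01 m (S a n) + arcsine_cumulant m)
      sequentially"
    using eventually_nonresonant[of m]
    by eventually_elim (simp add: cumulant01_S_Suc arcsine_cumulant_eq_cumulant01)
  then show ?thesis
    by (rule eventually_constant_increment)
qed

end
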